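(* Let $(\Omega,P)$ be a 2-class attributed random graph model and let $y(x)=(\phi'_G\circ\sigma\circ\phi_G)[X](i)$ be any generalized two-layer GCN without bias on $\Omega$ (with $\phi,\phi'$ linear un-biased aggregators, $\phi'$ mapping into $\mathbb{R}$, $\sigma$ the ReLU). Assume the relevant costs are finite. If $\Omega$ is class-symmetric about the origin, then $$C(L[y])\le C(y).$$ Furthermore, if $\Omega$ is symmetric about a subspace $S\subseteq\mathbb{R}^{m_{\mathrm{feat}}}$, then $$C(P_S[L[y]])\le C(L[y]).$$
   Context: A 2-class attributed random graph model is a probability space $(\Omega,P)$ of tuples $x=(G,i,v,X)$ where $G$ is a graph, $i$ is a node of $G$, $v:V(G)\to\{-1,1\}$ assigns classes and $X:V(G)\to\mathbb{R}^{m_{\mathrm{feat}}}$ assigns feature vectors; write $v(x)=v(i)$. Negation: $-x=(G,i,-v,-X)$ and $-F=\{-x:x\in F\}$. $\Omega$ is class-symmetric about the origin if $P(F)=P(-F)$ for all measurable $F\subseteq\Omega$. For a subspace $S\subseteq\mathbb{R}^{m_{\mathrm{feat}}}$, let $P_S$ be orthogonal projection onto $S$, $P_\perp=I-P_S$, and $R_S=P_S-P_\perp$ reflection across $S$; set $R_S(x)=(G,i,v,R_S\circ X)$ and $R_S(F)=\{R_S(x):x\in F\}$. $\Omega$ is symmetric about $S$ if $P(R_S(F))=P(F)$ for all measurable $F$. A model $y$ assigns a real number $y(x)$ to each $x\in\Omega$; its cost is $C(y)=\mathbb{E}_{x\sim\Omega}[-\log P(v(x):y(x))]$, where $P(v(x):y(x))=\sigma_s(y(x))$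 if $v(x)=1$ and $1-\sigma_s(y(x))$ if $v(x)=-1$, with $\sigma_s(z)=1/(1+e^{-z})$. A graph aggregation $\phi$ maps $(G,X)$ to new features $X':V(G)\to\mathbb{R}^l$; $\phi_G=\phi(G,\cdot)$; it is linear un-biased if $\phi_G(X_1+X_2)=\phi_G(X_1)+\phi_G(X_2)$ for all $G,X_1,X_2$ (and consequently commutes with scalar multiplication by $-1$, as used). A generalized two-layer GCN without bias is $y(x)=(\phi'_G\circ\sigma\circ\phi_G)[X](i)$ with $\sigma$ the ReLU applied entrywise. Its linear approximation is $L[y](x)=\tfrac12(\phi'_G\circ\phi_G)[X](i)$, and the projection of this onto $S$ is $P_S[L[y]](x)=\tfrac12(\phi'_G\circ\phi_G\circ P_S)[X](i)$. *)

theory Defs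
  imports "HOL-Probability.Probability"
begin

text \<open>A sample x = (G, i, v, X): graph G (abstract type 'g), node i, class assignment v
  (real valued, classes -1 and 1), feature assignment X with features in real^'m.\<close>
type_synonym ('g, 'v, 'm) sample = "'g \<times> 'v \<times> ('v \<Rightarrow> real) \<times> ('v \<Rightarrow> real ^ 'm::finite)"

definition sample_class :: "('g, 'v, 'm::finite) sample \<Rightarrow> real" where
  "sample_class x = (case x of (G, i, v, X) \<Rightarrow> v i)"

definition neg_sample :: "('g, 'v, 'm::finite) sample \<Rightarrow> ('g, 'v, 'm::finite) sample" where
  "neg_sample x = (case x of (G, i, v, X) \<Rightarrow> (G, i, \<lambda>u. - v u, \<lambda>u. - X u))"

definition class_symmetric :: "('g, 'v, 'm::finite) sample measure \<Rightarrow> bool" where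
  "class_symmetric M \<longleftrightarrow>
     (\<forall>F \<in> sets M. neg_sample ` F \<in> sets M \<and> measure M (neg_sample ` F) = measure M F)"

definition orth_proj :: "(real ^ 'm::finite) set \<Rightarrow> real ^ 'm \<Rightarrow> real ^ 'm" where
  "orth_proj S x = (THE p. p \<in> S \<and> (\<forall>s \<in> S. (x - p) \<bullet> s = 0))"

definition reflect :: "(real ^ 'm::finite) set \<Rightarrow> real ^ 'm \<Rightarrow> real ^ 'm" where
  "reflect S x = orth_proj S x - (x - orth_proj S x)"

definition reflect_sample :: "(real ^ 'm::finite) set \<Rightarrow> ('g, 'v, 'm::finite) sample \<Rightarrow> ('g, 'v, 'm::finite) sample" where
  "reflect_sample S x = (case x of (G, i, v, X) \<Rightarrow> (G, i, v, \<lambda>u. reflect S (X u)))"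

definition symmetric_about :: "('g, 'v, 'm::finite) sample measure \<Rightarrow> (real ^ 'm::finite) set \<Rightarrow> bool" where
  "symmetric_about M S \<longleftrightarrow>
     (\<forall>F \<in> sets M. reflect_sample S ` F \<in> sets M \<and> measure M (reflect_sample S ` F) = measure M F)"

definition sigmoid :: "real \<Rightarrow> real" where
  "sigmoid z = 1 / (1 + exp (- z))"

definition class_prob :: "real \<Rightarrow> real \<Rightarrow> real" where
  "class_prob c z = (if c = 1 then sigmoid z else 1 - sigmoid z)"

definition loss :: "('g, 'v, 'm::finite) sample \<Rightarrow> real \<Rightarrow> real" where
  "loss x z = - ln (class_prob (sample_class x) z)"

definition cost :: "('g, 'v, 'm::finite) sample measure \<Rightarrow> (('g, 'v, 'm::finite) sample \<Rightarrow> real) \<Rightarrow> real" where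
  "cost M y = (\<integral>x. loss x (y x) \<partial>M)"

text \<open>Finiteness of the cost (the loss is nonnegative, so this is integrability).\<close>
definition finite_cost :: "('g, 'v, 'm::finite) sample measure \<Rightarrow> (('g, 'v, 'm::finite) sample \<Rightarrow> real) \<Rightarrow> bool" where
  "finite_cost M y \<longleftrightarrow> integrable M (\<lambda>x. loss x (y x))"

definition lin_unbiased :: "('g \<Rightarrow> ('v \<Rightarrow> 'a::ab_group_add) \<Rightarrow> ('v \<Rightarrow> 'b::ab_group_add)) \<Rightarrow> bool" where
  "lin_unbiased \<phi> \<longleftrightarrow> (\<forall>G X1 X2. \<phi> G (\<lambda>u. X1 u + X2 u) = (\<lambda>u. \<phi> G X1 u + \<phi> G X2 u))"

definition relu_vec :: "real ^ 'l \<Rightarrow> real ^ 'l" where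
  "relu_vec h = (\<chi> j. max 0 (h $ j))"

definition gcn2 :: "('g \<Rightarrow> ('v \<Rightarrow> real ^ 'm::finite) \<Rightarrow> ('v \<Rightarrow> real ^ 'l::finite)) \<Rightarrow>
    ('g \<Rightarrow> ('v \<Rightarrow> real ^ 'l::finite) \<Rightarrow> ('v \<Rightarrow> real)) \<Rightarrow> ('g, 'v, 'm::finite) sample \<Rightarrow> real" where
  "gcn2 \<phi> \<phi>' x = (case x of (G, i, v, X) \<Rightarrow> \<phi>' G (\<lambda>u. relu_vec (\<phi> G X u)) i)"

definition lin_approx :: "('g \<Rightarrow> ('v \<Rightarrow> real ^ 'm::finite) \<Rightarrow> ('v \<Rightarrow> real ^ 'l::finite)) \<Rightarrow>
    ('g \<Rightarrow> ('v \<Rightarrow> real ^ 'l::finite) \<Rightarrow> ('v \<Rightarrow> real)) \<Rightarrow> ('g, 'v, 'm::finite) sample \<Rightarrow> real" where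
  "lin_approx \<phi> \<phi>' x = (case x of (G, i, v, X) \<Rightarrow> (1/2) * \<phi>' G (\<phi> G X) i)"

definition proj_lin_approx :: "(real ^ 'm::finite) set \<Rightarrow> ('g \<Rightarrow> ('v \<Rightarrow> real ^ 'm::finite) \<Rightarrow> ('v \<Rightarrow> real ^ 'l::finite)) \<Rightarrow>
    ('g \<Rightarrow> ('v \<Rightarrow> real ^ 'l::finite) \<Rightarrow> ('v \<Rightarrow> real)) \<Rightarrow> ('g, 'v, 'm::finite) sample \<Rightarrow> real" where
  "proj_lin_approx S \<phi> \<phi>' x =
     (case x of (G, i, v, X) \<Rightarrow> (1/2) * \<phi>' G (\<phi> G (\<lambda>u. orth_proj S (X u))) i)"

end

theory Submission
  imports Defs
begin

text \<open>Both inequalities come from one symmetrization argument. A measure-preserving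
  involution T of the sample space (negation of classes and features, resp. reflection of
  the features across S) exhibits the smaller model as the midpoint of the larger one y at
  x and at T x: L[y] x = (y x - y (-x)) / 2 because ReLU(h) - ReLU(-h) = h, and
  P_S[L[y]] x = (L[y] x + L[y] (R_S x)) / 2 because X + R_S X = 2 P_S X. The loss
  z \<mapsto> ln (1 + exp (- c z)) of a sample of class c is convex, and the loss of y at T x can
  be read as a loss at x. Hence 2 loss(x, midpoint) \<le> loss(x, y x) + loss(T x, y (T x)),
  and integrating gives the claim, since the second term has the same integral as the first.\<close>

lemma orth_proj_unique:
  fixes S :: "(real ^ 'm::finite) set"
  assumes "subspace S" and "p \<in> S" and "\<forall>s\<in>S. (x - p) \<bullet> s = 0"
  shows "orth_proj S x = p"
  unfolding orth_proj_def
proof (rule the_equality)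
  show "p \<in> S \<and> (\<forall>s\<in>S. (x - p) \<bullet> s = 0)" using assms by blast
next
  fix q assume q: "q \<in> S \<and> (\<forall>s\<in>S. (x - q) \<bullet> s = 0)"
  have "p - q \<in> S" using assms q by (simp add: subspace_diff)
  then have "(x - q) \<bullet> (p - q) - (x - p) \<bullet> (p - q) = 0" using assms q by simp
  then have "(p - q) \<bullet> (p - q) = 0" by (simp add: inner_diff_left inner_diff_right inner_commute)
  then show "q = p" by simp
qed

lemma orth_proj_in_orthogonal:
  fixes S :: "(real ^ 'm::finite) set"
  assumes "subspace S"
  shows "orth_proj S x \<in> S" and "\<forall>s\<in>S. (x - orth_proj S x) \<bullet> s = 0"
proof -
  obtain y z where y: "y \<in> span S" and z: "\<And>w. w \<in> span S \<Longrightarrow> orthogonal z w"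
    and x: "x = y + z"
    using orthogonal_subspace_decomp_exists[of S x] by blast
  have "y \<in> S" using y assms by (metis span_eq_iff)
  moreover have "\<forall>s\<in>S. (x - y) \<bullet> s = 0" using z x span_base by (force simp: orthogonal_def)
  ultimately show "orth_proj S x \<in> S" and "\<forall>s\<in>S. (x - orth_proj S x) \<bullet> s = 0"
    using orth_proj_unique[OF assms] by simp_all
qed

lemma reflect_reflect:
  fixes S :: "(real ^ 'm::finite) set"
  assumes "subspace S"
  shows "reflect S (reflect S x) = x"
proof -
  let ?p = "orth_proj S x"
  have "reflect S x - ?p = - (x - ?p)" unfolding reflect_def by simp
  then have "\<forall>s\<in>S. (reflect S x - ?p) \<bullet> s = 0"
    using orth_proj_in_orthogonal(2)[OF assms, of x] by (simp add: inner_diff_left)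
  then have "orth_proj S (reflect S x) = ?p"
    using orth_proj_unique[OF assms] orth_proj_in_orthogonal(1)[OF assms] by blast
  then show ?thesis unfolding reflect_def by simp
qed

lemma reflect_sample_reflect_sample:
  "subspace S \<Longrightarrow> reflect_sample S (reflect_sample S x) = x"
  unfolding reflect_sample_def by (cases x) (simp add: reflect_reflect)

lemma neg_sample_neg_sample: "neg_sample (neg_sample x) = x"
  unfolding neg_sample_def by (cases x) simp

lemma distr_involution_eq:
  assumes "finite_measure M"
    and preserving: "\<forall>F\<in>sets M. T ` F \<in> sets M \<and> measure M (T ` F) = measure M F"
    and involution: "\<And>x. x \<in> space M \<Longrightarrow> T (T x) = x"
  shows "T \<in> M \<rightarrow>\<^sub>M M" and "distr M M T = M"
proof -
  interpret finite_measure M by fact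
  have T_space: "T ` space M \<subseteq> space M" using preserving sets.sets_into_space by blast
  have vimage: "T -` F \<inter> space M = T ` F" if "F \<in> sets M" for F
  proof -
    have "F \<subseteq> space M" using that sets.sets_into_space by blast
    then show ?thesis using T_space involution by auto (metis image_eqI)
  qed
  show T: "T \<in> M \<rightarrow>\<^sub>M M"
    by (rule measurableI) (use T_space vimage preserving in auto)
  show "distr M M T = M"
  proof (rule measure_eqI)
    fix A assume "A \<in> sets (distr M M T)"
    then have A: "A \<in> sets M" by simp
    then have "emeasure (distr M M T) A = emeasure M (T ` A)"
      using emeasure_distr[OF T A] vimage by simp
    also have "\<dots> = emeasure M A"
      using preserving A by (simp add: emeasure_eq_measure)
    finally show "emeasure (distr M M T) A = emeasure M A" .
  qed simp
qed

lemma integral_involution_invariant: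
  fixes f :: "'a \<Rightarrow> real"
  assumes "finite_measure M"
    and "\<forall>F\<in>sets M. T ` F \<in> sets M \<and> measure M (T ` F) = measure M F"
    and "\<And>x. x \<in> space M \<Longrightarrow> T (T x) = x"
    and f: "integrable M f"
  shows "integrable M (\<lambda>x. f (T x))" and "(\<integral>x. f (T x) \<partial>M) = (\<integral>x. f x \<partial>M)"
proof -
  note T = distr_involution_eq[OF assms(1-3)]
  have f_meas: "f \<in> borel_measurable M" using f by simp
  show "integrable M (\<lambda>x. f (T x))"
    using integrable_distr_eq[OF T(1) f_meas] f T(2) by simp
  show "(\<integral>x. f (T x) \<partial>M) = (\<integral>x. f x \<partial>M)"
    using integral_distr[OF T(1) f_meas] T(2) by simp
qed

lemma ln_one_plus_exp_midpoint_convex: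
  fixes s t :: real
  shows "2 * ln (1 + exp ((s + t) / 2)) \<le> ln (1 + exp s) + ln (1 + exp t)"
proof -
  define u where "u = exp (s / 2)"
  define w where "w = exp (t / 2)"
  have pos: "0 < 1 + u * w" "0 < 1 + u * u" "0 < 1 + w * w"
    by (simp_all add: u_def w_def add_pos_pos)
  have exps: "exp s = u * u" "exp t = w * w" "exp ((s + t) / 2) = u * w"
    unfolding u_def w_def by (simp_all flip: exp_add add: add_divide_distrib)
  have "(1 + u * w) * (1 + u * w) \<le> (1 + u * u) * (1 + w * w)"
    using zero_le_square[of "u - w"] by (simp add: algebra_simps power2_eq_square)
  moreover have "0 < (1 + u * w) * (1 + u * w)" using pos by simp
  ultimately have "ln ((1 + u * w) * (1 + u * w)) \<le> ln ((1 + u * u) * (1 + w * w))"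
    by (rule ln_mono)
  then show ?thesis using pos by (simp add: exps ln_mult)
qed

lemma class_prob_eq:
  assumes "c \<in> {-1, 1}"
  shows "class_prob c z = 1 / (1 + exp (- c * z))"
proof -
  have "0 < 1 + exp z" by (simp add: add_pos_pos)
  then have "1 - 1 / (1 + exp (- z)) = 1 / (1 + exp z)"
    by (simp add: exp_minus field_simps)
  then show ?thesis using assms unfolding class_prob_def sigmoid_def by auto
qed

lemma loss_eq:
  "sample_class x \<in> {-1, 1} \<Longrightarrow> loss x z = ln (1 + exp (- sample_class x * z))"
  unfolding loss_def by (simp add: class_prob_eq ln_div add_pos_pos)

lemma loss_midpoint_convex:
  assumes "sample_class x \<in> {-1, 1}"
  shows "2 * loss x ((a + b) / 2) \<le> loss x a + loss x b"
proof -
  have "- sample_class x * ((a + b) / 2) = (- sample_class x * a + - sample_class x * b) / 2"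
    by (simp add: field_simps)
  then show ?thesis
    unfolding loss_eq[OF assms] by (simp only: ln_one_plus_exp_midpoint_convex)
qed

lemma loss_neg_sample:
  assumes "sample_class x \<in> {-1, 1}"
  shows "loss (neg_sample x) z = loss x (- z)"
proof -
  have neg: "sample_class (neg_sample x) = - sample_class x"
    unfolding sample_class_def neg_sample_def by (cases x) simp
  then have "sample_class (neg_sample x) \<in> {-1, 1}" using assms by auto
  from loss_eq[OF this] show ?thesis using neg by (simp add: loss_eq[OF assms])
qed

lemma loss_reflect_sample: "loss (reflect_sample S x) z = loss x z"
  unfolding loss_def sample_class_def reflect_sample_def by (cases x) simp

lemma cost_le_of_involution_midpoint:
  assumes "finite_measure M"
    and "\<forall>F\<in>sets M. T ` F \<in> sets M \<and> measure M (T ` F) = measure M F"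
    and "\<And>x. x \<in> space M \<Longrightarrow> T (T x) = x"
    and y: "finite_cost M y" and L: "finite_cost M L"
    and midpoint: "\<And>x. x \<in> space M \<Longrightarrow> 2 * loss x (L x) \<le> loss x (y x) + loss (T x) (y (T x))"
  shows "cost M L \<le> cost M y"
proof -
  note T = integral_involution_invariant[OF assms(1-3), of "\<lambda>x. loss x (y x)"]
  have "2 * cost M L = (\<integral>x. 2 * loss x (L x) \<partial>M)" unfolding cost_def by simp
  also have "\<dots> \<le> (\<integral>x. loss x (y x) + loss (T x) (y (T x)) \<partial>M)"
    using y L T(1) midpoint unfolding finite_cost_def by (intro integral_mono) auto
  also have "\<dots> = 2 * cost M y"
    using y T unfolding finite_cost_def cost_def by simp
  finally show ?thesis by simp
qed

lemma lin_unbiased_add: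
  "lin_unbiased \<phi> \<Longrightarrow> \<phi> G (\<lambda>u. X u + Y u) = (\<lambda>u. \<phi> G X u + \<phi> G Y u)"
  unfolding lin_unbiased_def by blast

lemma lin_unbiased_uminus:
  assumes "lin_unbiased \<phi>"
  shows "\<phi> G (\<lambda>u. - X u) = (\<lambda>u. - \<phi> G X u)"
proof -
  note add = lin_unbiased_add[OF assms]
  have "\<phi> G (\<lambda>u. 0) = (\<lambda>u. \<phi> G (\<lambda>u. 0) u + \<phi> G (\<lambda>u. 0) u)"
    using add[of G "\<lambda>u. 0" "\<lambda>u. 0"] by simp
  then have zero: "\<phi> G (\<lambda>u. 0) = (\<lambda>u. 0)" by (simp add: fun_eq_iff)
  have "(\<lambda>u. \<phi> G X u + \<phi> G (\<lambda>u. - X u) u) = (\<lambda>u. 0)"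
    using add[of G X "\<lambda>u. - X u"] zero by simp
  then show ?thesis by (simp add: fun_eq_iff add_eq_0_iff)
qed

lemma relu_vec_eq_relu_vec_uminus_add: "relu_vec h = relu_vec (- h) + h"
  unfolding relu_vec_def by (simp add: vec_eq_iff max_def)

lemma lin_approx_eq_antisymmetrization:
  assumes "lin_unbiased \<phi>" and "lin_unbiased \<phi>'"
  shows "lin_approx \<phi> \<phi>' x = (gcn2 \<phi> \<phi>' x + - gcn2 \<phi> \<phi>' (neg_sample x)) / 2"
proof -
  obtain G i v X where x: "x = (G, i, v, X)" by (cases x)
  define h where "h = \<phi> G X"
  have "(\<lambda>u. relu_vec (h u)) = (\<lambda>u. relu_vec (- h u) + h u)"
    by (rule ext) (rule relu_vec_eq_relu_vec_uminus_add)
  then have "\<phi>' G (\<lambda>u. relu_vec (h u)) i = \<phi>' G (\<lambda>u. relu_vec (- h u)) i + \<phi>' G h i"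
    by (simp add: lin_unbiased_add[OF assms(2)])
  then show ?thesis
    unfolding x gcn2_def lin_approx_def neg_sample_def
    by (simp add: lin_unbiased_uminus[OF assms(1)] h_def)
qed

lemma proj_lin_approx_eq_symmetrization:
  assumes "lin_unbiased \<phi>" and "lin_unbiased \<phi>'"
  shows "proj_lin_approx S \<phi> \<phi>' x
           = (lin_approx \<phi> \<phi>' x + lin_approx \<phi> \<phi>' (reflect_sample S x)) / 2"
proof -
  obtain G i v X where x: "x = (G, i, v, X)" by (cases x)
  define p where "p = (\<lambda>u. orth_proj S (X u))"
  have "(\<lambda>u. X u + reflect S (X u)) = (\<lambda>u. p u + p u)"
    unfolding reflect_def p_def by simp
  then have "\<phi>' G (\<phi> G X) i + \<phi>' G (\<phi> G (\<lambda>u. reflect S (X u))) i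
               = \<phi>' G (\<phi> G p) i + \<phi>' G (\<phi> G p) i"
    using assms unfolding lin_unbiased_def by metis
  then show ?thesis
    unfolding x proj_lin_approx_def lin_approx_def reflect_sample_def p_def by simp
qed

lemma lin_approx_cost_le_gcn2_cost:
  assumes "finite_measure M" and "\<forall>x \<in> space M. sample_class x \<in> {-1, 1}"
    and "lin_unbiased \<phi>" and "lin_unbiased \<phi>'"
    and "finite_cost M (gcn2 \<phi> \<phi>')" and "finite_cost M (lin_approx \<phi> \<phi>')"
    and "class_symmetric M"
  shows "cost M (lin_approx \<phi> \<phi>') \<le> cost M (gcn2 \<phi> \<phi>')"
proof (rule cost_le_of_involution_midpoint[where T = neg_sample])
  fix x assume "x \<in> space M"
  then have c: "sample_class x \<in> {-1, 1}" using assms(2) by blast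
  show "2 * loss x (lin_approx \<phi> \<phi>' x)
          \<le> loss x (gcn2 \<phi> \<phi>' x) + loss (neg_sample x) (gcn2 \<phi> \<phi>' (neg_sample x))"
    unfolding lin_approx_eq_antisymmetrization[OF assms(3,4)] loss_neg_sample[OF c]
    by (rule loss_midpoint_convex[OF c])
qed (use assms in \<open>simp_all add: class_symmetric_def neg_sample_neg_sample\<close>)

lemma proj_lin_approx_cost_le_lin_approx_cost:
  assumes "finite_measure M" and "\<forall>x \<in> space M. sample_class x \<in> {-1, 1}"
    and "lin_unbiased \<phi>" and "lin_unbiased \<phi>'" and "subspace S"
    and "finite_cost M (lin_approx \<phi> \<phi>')" and "finite_cost M (proj_lin_approx S \<phi> \<phi>')"
    and "symmetric_about M S"
  shows "cost M (proj_lin_approx S \<phi> \<phi>') \<le> cost M (lin_approx \<phi> \<phi>')"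
proof (rule cost_le_of_involution_midpoint[where T = "reflect_sample S"])
  fix x assume "x \<in> space M"
  then have c: "sample_class x \<in> {-1, 1}" using assms(2) by blast
  show "2 * loss x (proj_lin_approx S \<phi> \<phi>' x)
          \<le> loss x (lin_approx \<phi> \<phi>' x)
            + loss (reflect_sample S x) (lin_approx \<phi> \<phi>' (reflect_sample S x))"
    unfolding proj_lin_approx_eq_symmetrization[OF assms(3,4)] loss_reflect_sample
    by (rule loss_midpoint_convex[OF c])
qed (use assms in \<open>simp_all add: symmetric_about_def reflect_sample_reflect_sample\<close>)

theorem theorem2:
  fixes M :: "('g, 'v, 'm::finite) sample measure"
    and \<phi> :: "'g \<Rightarrow> ('v \<Rightarrow> real ^ 'm) \<Rightarrow> ('v \<Rightarrow> real ^ 'l::finite)"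
    and \<phi>' :: "'g \<Rightarrow> ('v \<Rightarrow> real ^ 'l) \<Rightarrow> ('v \<Rightarrow> real)"
    and S :: "(real ^ 'm) set"
  assumes "prob_space M"
    and "\<forall>x \<in> space M. sample_class x \<in> {-1, 1}"
    and "lin_unbiased \<phi>" and "lin_unbiased \<phi>'"
  shows "(finite_cost M (gcn2 \<phi> \<phi>') \<and> finite_cost M (lin_approx \<phi> \<phi>') \<and> class_symmetric M
           \<longrightarrow> cost M (lin_approx \<phi> \<phi>') \<le> cost M (gcn2 \<phi> \<phi>'))
         \<and> (subspace S \<and> finite_cost M (lin_approx \<phi> \<phi>') \<and> finite_cost M (proj_lin_approx S \<phi> \<phi>')
           \<and> symmetric_about M S
           \<longrightarrow> cost M (proj_lin_approx S \<phi> \<phi>') \<le> cost M (lin_approx \<phi> \<phi>'))"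
  using lin_approx_cost_le_gcn2_cost[OF prob_space.axioms(1)[OF assms(1)] assms(2-4)]
    proj_lin_approx_cost_le_lin_approx_cost[OF prob_space.axioms(1)[OF assms(1)] assms(2-4)]
  by blast

end
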